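(* Let $(G,\tau,\oplus)$ be a topological gyrogroup and let $G^{\bullet}$ be the gyrogroup of step functions defined in the context. Then the family $\{O(V,\varepsilon): V \text{ an open neighbourhood of } 0 \text{ in } G,\ \varepsilon>0\}$ is a local base at the identity $\mathbf{0}^{\bullet}$ of a topology on $G^{\bullet}$ which makes $(G^{\bullet},\oplus^{\bullet})$ a Hausdorff topological gyrogroup; in this topology, for each $f\in G^{\bullet}$ the sets $f\oplus^{\bullet}O(V,\varepsilon)$ form a local base at $f$.
   Context: A gyrogroup is a set $G$ with a binary operation $\oplus$ such that: (G1) there is a unique identity $0$ with $0\oplus a=a=a\oplus 0$; (G2) each $x$ has a unique inverse $\ominus x$ with $\ominus x\oplus x=0=x\oplus(\ominus x)$; (G3) for all $x,y$ there is an automorphism $\mathrm{gyr}[x,y]$ of $(G,\oplus)$ with $x\oplus(y\oplus z)=(x\oplus y)\oplus \mathrm{gyr}[x,y](z)$ for all $z$; (G4) $\mathrm{gyr}[x\oplus y,y]=\mathrm{gyr}[x,y]$. A topological gyrogroup is a gyrogroup with a topology (all spaces are assumed $T_1$) such that $\oplus:G\times G\to G$ is jointly continuous and $x\mapsto\ominus x$ is continuous. Construction: let $J=[0,1)$ and let $G^{\bullet}$ be the set of all functions $f:J\to G$ for which there exist $0=a_0<a_1<\dots<a_n=1$ with $f$ constant on each $[a_k,a_{k+1})$. Define $(f\oplus^{\bullet}g)(r)=f(r)\oplus g(r)$; then $(G^{\bullet},\oplus^{\bullet})$ is a gyrogroup with identity $\mathbf{0}^{\bullet}$ (the constant function $0$),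 inverse $(\ominus^{\bullet}f)(r)=\ominus f(r)$, and gyrations $\mathrm{gyr}[f,g](h)(r)=\mathrm{gyr}[f(r),g(r)](h(r))$. For an open neighbourhood $V$ of $0$ in $G$ and $\varepsilon>0$ let $O(V,\varepsilon)=\{f\in G^{\bullet}:\mu(\{r\in J: f(r)\notin V\})<\varepsilon\}$, where $\mu$ is Lebesgue measure. *)

theory Defs
  imports "HOL-Analysis.Analysis"
begin

definition gyro_aut :: "'a set \<Rightarrow> ('a \<Rightarrow> 'a \<Rightarrow> 'a) \<Rightarrow> ('a \<Rightarrow> 'a) \<Rightarrow> bool" where
  "gyro_aut G op \<phi> \<longleftrightarrow> bij_betw \<phi> G G \<and> (\<forall>a\<in>G. \<forall>b\<in>G. \<phi> (op a b) = op (\<phi> a) (\<phi> b))"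

definition gyrogroup :: "'a set \<Rightarrow> ('a \<Rightarrow> 'a \<Rightarrow> 'a) \<Rightarrow> bool" where
  "gyrogroup G op \<longleftrightarrow>
     (\<forall>x\<in>G. \<forall>y\<in>G. op x y \<in> G) \<and>
     (\<exists>!e. e \<in> G \<and> (\<forall>a\<in>G. op e a = a \<and> op a e = a)) \<and>
     (\<forall>e\<in>G. (\<forall>a\<in>G. op e a = a \<and> op a e = a) \<longrightarrow>
        (\<forall>x\<in>G. \<exists>!y. y \<in> G \<and> op y x = e \<and> op x y = e)) \<and>
     (\<exists>gyr. (\<forall>x\<in>G. \<forall>y\<in>G. gyro_aut G op (gyr x y)) \<and>
            (\<forall>x\<in>G. \<forall>y\<in>G. \<forall>z\<in>G. op x (op y z) = op (op x y) (gyr x y z)) \<and>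
            (\<forall>x\<in>G. \<forall>y\<in>G. \<forall>z\<in>G. gyr (op x y) y z = gyr x y z))"

definition gzero :: "'a set \<Rightarrow> ('a \<Rightarrow> 'a \<Rightarrow> 'a) \<Rightarrow> 'a" where
  "gzero G op = (THE e. e \<in> G \<and> (\<forall>a\<in>G. op e a = a \<and> op a e = a))"

definition ginv :: "'a set \<Rightarrow> ('a \<Rightarrow> 'a \<Rightarrow> 'a) \<Rightarrow> 'a \<Rightarrow> 'a" where
  "ginv G op x = (THE y. y \<in> G \<and> op y x = gzero G op \<and> op x y = gzero G op)"

definition topological_gyrogroup :: "'a topology \<Rightarrow> ('a \<Rightarrow> 'a \<Rightarrow> 'a) \<Rightarrow> bool" where
  "topological_gyrogroup T op \<longleftrightarrow>
     gyrogroup (topspace T) op \<and> t1_space T \<and>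
     continuous_map (prod_topology T T) T (\<lambda>(x, y). op x y) \<and>
     continuous_map T T (ginv (topspace T) op)"

definition local_base_at :: "'a topology \<Rightarrow> 'a set set \<Rightarrow> 'a \<Rightarrow> bool" where
  "local_base_at T \<B> x \<longleftrightarrow>
     (\<forall>B\<in>\<B>. openin T B \<and> x \<in> B) \<and>
     (\<forall>U. openin T U \<and> x \<in> U \<longrightarrow> (\<exists>B\<in>\<B>. B \<subseteq> U))"

text \<open>Elements of G-bullet are functions J = [0,1) \<rightarrow> G, represented as functions real \<Rightarrow> 'a
  that take the value 0 (identity of G) outside J.\<close>
definition stepfuns :: "'a set \<Rightarrow> ('a \<Rightarrow> 'a \<Rightarrow> 'a) \<Rightarrow> (real \<Rightarrow> 'a) set" where
  "stepfuns G op = {f. (\<forall>r. r \<notin> {0..<1} \<longrightarrow> f r = gzero G op) \<and>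
     (\<exists>(a::nat \<Rightarrow> real) n. a 0 = 0 \<and> a n = 1 \<and> (\<forall>k<n. a k < a (Suc k)) \<and>
        (\<forall>k<n. \<exists>c\<in>G. \<forall>r\<in>{a k..<a (Suc k)}. f r = c))}"

definition stepop :: "('a \<Rightarrow> 'a \<Rightarrow> 'a) \<Rightarrow> (real \<Rightarrow> 'a) \<Rightarrow> (real \<Rightarrow> 'a) \<Rightarrow> (real \<Rightarrow> 'a)" where
  "stepop op f g = (\<lambda>r. op (f r) (g r))"

definition Onbhd :: "'a set \<Rightarrow> ('a \<Rightarrow> 'a \<Rightarrow> 'a) \<Rightarrow> 'a set \<Rightarrow> real \<Rightarrow> (real \<Rightarrow> 'a) set" where
  "Onbhd G op V \<epsilon> = {f \<in> stepfuns G op. measure lebesgue {r \<in> {0..<1}. f r \<notin> V} < \<epsilon>}"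

end

theory Submission
  imports Defs
begin

text \<open>A step function takes only finitely many values, so a pointwise estimate that holds
  near each of these values can be made uniform by intersecting finitely many neighbourhoods
  of \<open>0\<close> in G (this is where continuity of \<open>\<oplus>\<close> and of inversion in G enters).
  Measuring the set of times at which u leaves \<open>f \<oplus> V\<close> turns such uniform pointwise
  implications into subadditive inequalities for Lebesgue measure. With these two tools the
  sets \<open>f \<oplus>\<^sup>\<bullet> O(V, \<epsilon>)\<close> are open neighbourhoods of f forming a topology, and joint
  continuity of \<open>\<oplus>\<^sup>\<bullet>\<close>, continuity of inversion and the Hausdorff property follow by
  the same argument; for the latter, two distinct step functions differ on a set of
  positive measure. The gyrogroup axioms for \<open>G\<^sup>\<bullet>\<close> hold pointwise.\<close>

section \<open>Step functions\<close>

lemma strict_mono_on_atMost_SucI: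
  assumes "\<And>k. k < n \<Longrightarrow> (a::nat \<Rightarrow> real) k < a (Suc k)"
  shows "strict_mono_on {..n} a"
proof (rule strict_mono_onI)
  fix i j assume "i \<in> {..n}" "j \<in> {..n}" "i < j"
  then have "j \<le> n" "i < j" by auto
  then show "a i < a j"
  proof (induction j)
    case (Suc j)
    have step: "a j < a (Suc j)" using assms Suc.prems(1) by simp
    show ?case
    proof (cases "i = j")
      case False
      then have "a i < a j" using Suc by simp
      then show ?thesis using step by simp
    qed (use step in simp)
  qed simp
qed

lemma partition_covers:
  assumes "a 0 = 0" "a n = 1" "r \<in> {0..<1::real}"
  obtains k where "k < n" "r \<in> {a k..<a (Suc k)}"
proof -
  define K where "K = {k. k \<le> n \<and> a k \<le> r}"
  have fin: "finite K" unfolding K_def by simp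
  have "0 \<in> K" using assms(1,3) unfolding K_def by simp
  then have "Max K \<in> K" using Max_in[OF fin] by blast
  then have k: "Max K \<le> n" "a (Max K) \<le> r" unfolding K_def by simp_all
  have "Max K \<noteq> n" using k(2) assms(2,3) by auto
  with k(1) have kn: "Max K < n" by simp
  have "Suc (Max K) \<notin> K" using Max_ge[OF fin, of "Suc (Max K)"] by auto
  then have "r < a (Suc (Max K))" using kn unfolding K_def by auto
  then show ?thesis using that kn k(2) by simp
qed

lemma partition_bounds:
  assumes "a 0 = 0" "a n = 1" "strict_mono_on {..n} (a::nat \<Rightarrow> real)" "k \<le> n"
  shows "0 \<le> a k" "a k \<le> 1"
  using strict_mono_on_leD[OF assms(3), of 0 k] strict_mono_on_leD[OF assms(3), of k n] assms
  by auto

lemma stepfuns_partition: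
  assumes "f \<in> stepfuns G op"
  obtains a n where "a 0 = 0" "a n = 1" "strict_mono_on {..n} a"
    "\<forall>k<n. f (a k) \<in> G"
    "\<forall>k<n. \<forall>r\<in>{a k..<a (Suc k)}. f r = f (a k)"
proof -
  obtain a n where a: "a 0 = 0" "a n = 1" "\<forall>k<n. a k < a (Suc k)"
    and const: "\<forall>k<n. \<exists>c\<in>G. \<forall>r\<in>{a k..<a (Suc k)}. f r = c"
    using assms unfolding stepfuns_def by blast
  have "f (a k) \<in> G \<and> (\<forall>r\<in>{a k..<a (Suc k)}. f r = f (a k))" if "k < n" for k
  proof -
    obtain c where "c \<in> G" "\<forall>r\<in>{a k..<a (Suc k)}. f r = c" using const \<open>k < n\<close> by blast
    moreover have "a k \<in> {a k..<a (Suc k)}" using a(3) \<open>k < n\<close> by simp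
    ultimately show ?thesis by simp
  qed
  then show ?thesis
    using that[OF a(1,2) strict_mono_on_atMost_SucI] a(3) by blast
qed

lemma stepfuns_outside: "f \<in> stepfuns G op \<Longrightarrow> r \<notin> {0..<1} \<Longrightarrow> f r = gzero G op"
  unfolding stepfuns_def by blast

lemma stepfuns_piecewise:
  assumes "f \<in> stepfuns G op" "r \<in> {0..<1}"
  obtains s t where "s < t" "{s..<t} \<subseteq> {0..<1}" "r \<in> {s..<t}" "f s \<in> G"
    "\<forall>x\<in>{s..<t}. f x = f s"
proof -
  obtain a n where a: "a 0 = 0" "a n = 1" "strict_mono_on {..n} a"
    and val: "\<forall>k<n. f (a k) \<in> G"
    and const: "\<forall>k<n. \<forall>r\<in>{a k..<a (Suc k)}. f r = f (a k)"
    by (rule stepfuns_partition[OF assms(1)])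
  obtain k where k: "k < n" "r \<in> {a k..<a (Suc k)}"
    using partition_covers[OF a(1,2) assms(2)] by blast
  show ?thesis
  proof (rule that[of "a k" "a (Suc k)"])
    have "0 \<le> a k" "a (Suc k) \<le> 1" using partition_bounds[OF a] k(1) by simp_all
    then show "{a k..<a (Suc k)} \<subseteq> {0..<1}" by auto
    show "a k < a (Suc k)" using k(1) by (intro strict_mono_onD[OF a(3)]) auto
    show "r \<in> {a k..<a (Suc k)}" by (rule k(2))
    show "f (a k) \<in> G" using val k(1) by blast
    show "\<forall>x\<in>{a k..<a (Suc k)}. f x = f (a k)" using const k(1) by blast
  qed
qed

lemma stepfuns_finite_image:
  assumes "f \<in> stepfuns G op"
  shows "finite (f ` {0..<1})"
proof -
  obtain a n where a: "a 0 = 0" "a n = 1" "strict_mono_on {..n} a"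
    and const: "\<forall>k<n. \<forall>r\<in>{a k..<a (Suc k)}. f r = f (a k)"
    by (rule stepfuns_partition[OF assms])
  have "f ` {0..<1} \<subseteq> (\<lambda>k. f (a k)) ` {..<n}"
  proof
    fix y assume "y \<in> f ` {0..<1}"
    then obtain r where r: "r \<in> {0..<1}" "y = f r" by blast
    obtain k where k: "k < n" "r \<in> {a k..<a (Suc k)}" using partition_covers[OF a(1,2) r(1)] by blast
    then show "y \<in> (\<lambda>k. f (a k)) ` {..<n}" using const[rule_format, OF k] r(2) by blast
  qed
  then show ?thesis by (rule finite_subset) simp
qed

lemma stepfuns_level_set_lmeasurable:
  assumes "f \<in> stepfuns G op"
  shows "{x \<in> {0..<1}. Q (f x)} \<in> lmeasurable"
proof -
  obtain a n where a: "a 0 = 0" "a n = 1" "strict_mono_on {..n} a"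
    and const: "\<forall>k<n. \<forall>r\<in>{a k..<a (Suc k)}. f r = f (a k)"
    by (rule stepfuns_partition[OF assms])
  have "{r \<in> {0..<1}. Q (f r)} = (\<Union>k\<in>{k. k < n \<and> Q (f (a k))}. {a k..<a (Suc k)})"
  proof (intro equalityI subsetI)
    fix r assume r: "r \<in> {r \<in> {0..<1}. Q (f r)}"
    then obtain k where k: "k < n" "r \<in> {a k..<a (Suc k)}"
      using partition_covers[OF a(1,2), of r] by blast
    then show "r \<in> (\<Union>k\<in>{k. k < n \<and> Q (f (a k))}. {a k..<a (Suc k)})"
      using const[rule_format, OF k] r by auto
  next
    fix r assume "r \<in> (\<Union>k\<in>{k. k < n \<and> Q (f (a k))}. {a k..<a (Suc k)})"
    then obtain k where k: "k < n" "Q (f (a k))" "r \<in> {a k..<a (Suc k)}" by blast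
    then have "0 \<le> a k" "a (Suc k) \<le> 1" using partition_bounds[OF a] by simp_all
    then show "r \<in> {r \<in> {0..<1}. Q (f r)}" using k const[rule_format, OF k(1,3)] by auto
  qed
  also have "\<dots> \<in> lmeasurable"
    by (intro fmeasurable.finite_UN) (auto intro: bounded_set_imp_lmeasurable)
  finally show ?thesis .
qed

lemma stepfuns_level_set_measure_pos:
  assumes "f \<in> stepfuns G op" "r \<in> {0..<1}" "Q (f r)"
  shows "measure lebesgue {x \<in> {0..<1}. Q (f x)} > 0"
proof -
  obtain s t where st: "s < t" "{s..<t} \<subseteq> {0..<1}" "r \<in> {s..<t}" "f s \<in> G"
    and const: "\<forall>x\<in>{s..<t}. f x = f s"
    by (rule stepfuns_piecewise[OF assms(1,2)])
  have "{s..<t} \<subseteq> {x \<in> {0..<1}. Q (f x)}"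
    using st(2) const const[rule_format, OF st(3)] assms(3) by auto
  then have "measure lebesgue {s..<t} \<le> measure lebesgue {x \<in> {0..<1}. Q (f x)}"
    by (rule measure_mono_fmeasurable[OF _ _ stepfuns_level_set_lmeasurable[OF assms(1)]]) auto
  then show ?thesis using st(1) by simp
qed

lemma stepfuns_value_in:
  assumes "f \<in> stepfuns G op" "r \<in> {0..<1}"
  shows "f r \<in> G"
proof -
  obtain s t where "r \<in> {s..<t}" "f s \<in> G" "\<forall>x\<in>{s..<t}. f x = f s"
    by (rule stepfuns_piecewise[OF assms])
  then show ?thesis by metis
qed

text \<open>Unlike partitions, the jump sets of finitely many step functions can simply be united;
  this gives closure of step functions under pointwise operations.\<close>
definition jumps_within :: "real set \<Rightarrow> (real \<Rightarrow> 'a) \<Rightarrow> bool" where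
  "jumps_within P f \<longleftrightarrow>
     finite P \<and> (\<forall>r s. 0 \<le> r \<longrightarrow> r \<le> s \<longrightarrow> s < 1 \<longrightarrow> {r<..s} \<inter> P = {} \<longrightarrow> f r = f s)"

lemma stepfuns_jumps_within:
  assumes "f \<in> stepfuns G op"
  obtains P where "jumps_within P f"
proof -
  obtain a n where a: "a 0 = 0" "a n = 1" "strict_mono_on {..n} a"
    and "\<forall>k<n. f (a k) \<in> G" and const: "\<forall>k<n. \<forall>r\<in>{a k..<a (Suc k)}. f r = f (a k)"
    by (rule stepfuns_partition[OF assms])
  have "f r = f s"
    if rs: "0 \<le> r" "r \<le> s" "s < 1" "{r<..s} \<inter> a ` {..n} = {}" for r s
  proof -
    obtain k where k: "k < n" "r \<in> {a k..<a (Suc k)}"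
      using partition_covers[OF a(1,2), of r] rs by auto
    have "a (Suc k) \<notin> {r<..s}" using rs(4) k(1) by auto
    then have "s \<in> {a k..<a (Suc k)}" using k(2) rs(2) by auto
    then show ?thesis using const k by metis
  qed
  then have "jumps_within (a ` {..n}) f" unfolding jumps_within_def by blast
  then show ?thesis by (rule that)
qed

lemma finite_set_enumeration:
  fixes Q :: "real set"
  assumes "finite Q" "Q \<subseteq> {0..1}" "0 \<in> Q" "1 \<in> Q"
  obtains a :: "nat \<Rightarrow> real" and n where "a 0 = 0" "a n = 1" "strict_mono_on {..n} a" "a ` {..n} = Q"
proof -
  define L where "L = sorted_list_of_set Q"
  define n where "n = length L - 1"
  have setL: "set L = Q" unfolding L_def using assms(1) by simp
  then have "L \<noteq> []" using assms(3) by auto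
  then have idx: "{..n} = {..<length L}" unfolding n_def by (cases L) auto
  have "sorted_wrt (<) L" unfolding L_def by simp
  then have mono: "strict_mono_on {..n} ((!) L)"
    unfolding idx by (intro strict_mono_onI) (simp add: sorted_wrt_nth_less)
  have img: "(!) L ` {..n} = Q"
    unfolding idx setL[symmetric] by (auto simp: in_set_conv_nth)
  have bounds: "0 \<le> L ! k" "L ! k \<le> 1" if "k \<le> n" for k
    using img assms(2) that by auto
  have "0 \<in> (!) L ` {..n}" "1 \<in> (!) L ` {..n}" using img assms(3,4) by simp_all
  then obtain i j where i: "i \<le> n" "L ! i = 0" and j: "j \<le> n" "L ! j = 1"
    by (metis atMost_iff imageE)
  have "L ! 0 \<le> L ! i" by (rule strict_mono_on_leD[OF mono]) (use i in simp_all)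
  moreover have "L ! j \<le> L ! n" by (rule strict_mono_on_leD[OF mono]) (use j in simp_all)
  moreover have "0 \<le> L ! 0" "L ! n \<le> 1" using bounds[of 0] bounds[of n] by simp_all
  ultimately have "L ! 0 = 0" "L ! n = 1" using i(2) j(2) by linarith+
  with mono img show ?thesis by (intro that)
qed

lemma jumps_within_stepfuns:
  assumes jumps: "jumps_within P f"
    and outside: "\<forall>r. r \<notin> {0..<1} \<longrightarrow> f r = gzero G op"
    and inside: "\<forall>r\<in>{0..<1}. f r \<in> G"
  shows "f \<in> stepfuns G op"
proof -
  define Q where "Q = insert 0 (insert 1 (P \<inter> {0<..<1}))"
  have "finite Q" "Q \<subseteq> {0..1}" "0 \<in> Q" "1 \<in> Q"
    using jumps unfolding Q_def jumps_within_def by auto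
  then obtain a :: "nat \<Rightarrow> real" and n
    where a: "a 0 = 0" "a n = 1" "strict_mono_on {..n} a" "a ` {..n} = Q"
    by (rule finite_set_enumeration)
  have "f r = f (a k)" if k: "k < n" "r \<in> {a k..<a (Suc k)}" for k r
  proof -
    have "{a k<..r} \<inter> P = {}"
    proof (rule ccontr)
      assume "{a k<..r} \<inter> P \<noteq> {}"
      then obtain p where p: "p \<in> P" "a k < p" "p \<le> r" by auto
      have "0 \<le> a k" "a (Suc k) \<le> 1" using partition_bounds[OF a(1-3)] k(1) by simp_all
      then have "p \<in> Q" using p k(2) unfolding Q_def by auto
      then obtain j where j: "j \<le> n" "p = a j" using a(4) by auto
      have "k < j" using strict_mono_on_less[OF a(3), of k j] j p(2) k(1) by simp
      moreover have "j < Suc k"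
        using strict_mono_on_less[OF a(3), of j "Suc k"] j p(3) k by simp
      ultimately show False by simp
    qed
    moreover have "0 \<le> a k" "a (Suc k) \<le> 1" using partition_bounds[OF a(1-3)] k(1) by simp_all
    ultimately show ?thesis using jumps k(2) unfolding jumps_within_def by auto
  qed
  moreover have "f (a k) \<in> G" if "k < n" for k
  proof -
    have "0 \<le> a k" using partition_bounds[OF a(1-3)] that by simp
    moreover have "a k < 1" using strict_mono_on_less[OF a(3), of k n] a(2) that by simp
    ultimately show ?thesis using inside by simp
  qed
  moreover have "\<forall>k<n. a k < a (Suc k)" using strict_mono_onD[OF a(3)] by simp
  ultimately show ?thesis
    unfolding stepfuns_def using outside a(1,2) by blast
qed

lemma jumps_within_map3:
  "jumps_within P f \<Longrightarrow> jumps_within Q g \<Longrightarrow> jumps_within R h \<Longrightarrow>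
    jumps_within (P \<union> Q \<union> R) (\<lambda>r. F (f r) (g r) (h r))"
  unfolding jumps_within_def by (simp add: Int_Un_distrib)

lemma stepfuns_map3:
  assumes "f \<in> stepfuns G op" "g \<in> stepfuns G op" "h \<in> stepfuns G op"
    and "\<forall>x\<in>G. \<forall>y\<in>G. \<forall>w\<in>G. F x y w \<in> G"
    and "F (gzero G op) (gzero G op) (gzero G op) = gzero G op"
  shows "(\<lambda>r. F (f r) (g r) (h r)) \<in> stepfuns G op"
proof -
  obtain P Q R where "jumps_within P f" "jumps_within Q g" "jumps_within R h"
    using stepfuns_jumps_within assms(1-3) by metis
  then have "jumps_within (P \<union> Q \<union> R) (\<lambda>r. F (f r) (g r) (h r))" by (rule jumps_within_map3)
  then show ?thesis
    by (rule jumps_within_stepfuns)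
      (use stepfuns_outside stepfuns_value_in assms in metis)+
qed

lemma stepfuns_map2:
  assumes "f \<in> stepfuns G op" "g \<in> stepfuns G op"
    and "\<forall>x\<in>G. \<forall>y\<in>G. F x y \<in> G" "F (gzero G op) (gzero G op) = gzero G op"
  shows "(\<lambda>r. F (f r) (g r)) \<in> stepfuns G op"
  using stepfuns_map3[OF assms(1,2,2), of "\<lambda>x y w. F x y"] assms(3,4) by simp

lemma stepfuns_map:
  assumes "f \<in> stepfuns G op" "\<forall>x\<in>G. F x \<in> G" "F (gzero G op) = gzero G op"
  shows "(\<lambda>r. F (f r)) \<in> stepfuns G op"
  using stepfuns_map3[OF assms(1,1,1), of "\<lambda>x y w. F x"] assms(2,3) by simp

lemma stepfuns_const_zero: "gzero G op \<in> G \<Longrightarrow> (\<lambda>r. gzero G op) \<in> stepfuns G op"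
  by (rule jumps_within_stepfuns[of "{}"]) (auto simp: jumps_within_def)

locale gyrogroup_on =
  fixes G :: "'a set" and gop :: "'a \<Rightarrow> 'a \<Rightarrow> 'a" (infixl "\<oplus>" 65)
  assumes gyrogroup: "gyrogroup G (\<oplus>)"
begin

abbreviation gyro_zero :: 'a ("\<zero>") where "\<zero> \<equiv> gzero G (\<oplus>)"
abbreviation gyro_neg :: "'a \<Rightarrow> 'a" ("\<ominus> _" [81] 80) where "\<ominus> x \<equiv> ginv G (\<oplus>) x"

lemmas gyrogroup_conjs = gyrogroup[unfolded gyrogroup_def]

lemma add_closed: "x \<in> G \<Longrightarrow> y \<in> G \<Longrightarrow> x \<oplus> y \<in> G"
  using conjunct1[OF gyrogroup_conjs] by blast

lemma ex1_zero: "\<exists>!e. e \<in> G \<and> (\<forall>a\<in>G. e \<oplus> a = a \<and> a \<oplus> e = a)"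
  by (rule conjunct1[OF conjunct2[OF gyrogroup_conjs]])

lemma zero: "\<zero> \<in> G \<and> (\<forall>a\<in>G. \<zero> \<oplus> a = a \<and> a \<oplus> \<zero> = a)"
  unfolding gzero_def by (rule theI'[OF ex1_zero])

lemma zero_in: "\<zero> \<in> G"
  and zero_left: "a \<in> G \<Longrightarrow> \<zero> \<oplus> a = a"
  and zero_right: "a \<in> G \<Longrightarrow> a \<oplus> \<zero> = a"
  using zero by auto

lemma ex1_neg: "x \<in> G \<Longrightarrow> \<exists>!y. y \<in> G \<and> y \<oplus> x = \<zero> \<and> x \<oplus> y = \<zero>"
  using conjunct1[OF conjunct2[OF conjunct2[OF gyrogroup_conjs]]] zero by blast

lemma neg: "x \<in> G \<Longrightarrow> \<ominus> x \<in> G \<and> \<ominus> x \<oplus> x = \<zero> \<and> x \<oplus> \<ominus> x = \<zero>"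
  unfolding ginv_def by (rule theI'[OF ex1_neg])

lemma neg_in: "x \<in> G \<Longrightarrow> \<ominus> x \<in> G"
  and neg_left: "x \<in> G \<Longrightarrow> \<ominus> x \<oplus> x = \<zero>"
  and neg_right: "x \<in> G \<Longrightarrow> x \<oplus> \<ominus> x = \<zero>"
  using neg by auto

lemma neg_unique: "x \<in> G \<Longrightarrow> y \<in> G \<Longrightarrow> y \<oplus> x = \<zero> \<Longrightarrow> x \<oplus> y = \<zero> \<Longrightarrow> \<ominus> x = y"
  unfolding ginv_def by (rule the1_equality[OF ex1_neg]) auto

lemma neg_zero: "\<ominus> \<zero> = \<zero>"
  using neg_unique zero_in zero_left by simp

definition gyr :: "'a \<Rightarrow> 'a \<Rightarrow> 'a \<Rightarrow> 'a" where
  "gyr = (SOME gyr. (\<forall>x\<in>G. \<forall>y\<in>G. gyro_aut G (\<oplus>) (gyr x y)) \<and>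
            (\<forall>x\<in>G. \<forall>y\<in>G. \<forall>w\<in>G. x \<oplus> (y \<oplus> w) = (x \<oplus> y) \<oplus> gyr x y w) \<and>
            (\<forall>x\<in>G. \<forall>y\<in>G. \<forall>w\<in>G. gyr (x \<oplus> y) y w = gyr x y w))"

lemma gyr: "(\<forall>x\<in>G. \<forall>y\<in>G. gyro_aut G (\<oplus>) (gyr x y)) \<and>
            (\<forall>x\<in>G. \<forall>y\<in>G. \<forall>w\<in>G. x \<oplus> (y \<oplus> w) = (x \<oplus> y) \<oplus> gyr x y w) \<and>
            (\<forall>x\<in>G. \<forall>y\<in>G. \<forall>w\<in>G. gyr (x \<oplus> y) y w = gyr x y w)"
  unfolding gyr_def by (rule someI_ex[OF conjunct2[OF conjunct2[OF conjunct2[OF gyrogroup_conjs]]]])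

lemma gyr_aut: "x \<in> G \<Longrightarrow> y \<in> G \<Longrightarrow> gyro_aut G (\<oplus>) (gyr x y)"
  and left_gyroassoc: "x \<in> G \<Longrightarrow> y \<in> G \<Longrightarrow> w \<in> G \<Longrightarrow> x \<oplus> (y \<oplus> w) = (x \<oplus> y) \<oplus> gyr x y w"
  and left_loop: "x \<in> G \<Longrightarrow> y \<in> G \<Longrightarrow> w \<in> G \<Longrightarrow> gyr (x \<oplus> y) y w = gyr x y w"
  using gyr by blast+

lemma gyr_in: "x \<in> G \<Longrightarrow> y \<in> G \<Longrightarrow> w \<in> G \<Longrightarrow> gyr x y w \<in> G"
  using gyr_aut unfolding gyro_aut_def by (meson bij_betw_apply)

lemma gyr_inj: "x \<in> G \<Longrightarrow> y \<in> G \<Longrightarrow> u \<in> G \<Longrightarrow> v \<in> G \<Longrightarrow> gyr x y u = gyr x y v \<Longrightarrow> u = v"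
  using gyr_aut unfolding gyro_aut_def by (meson bij_betw_imp_inj_on inj_onD)

lemma add_left_imp_eq: "a \<in> G \<Longrightarrow> x \<in> G \<Longrightarrow> y \<in> G \<Longrightarrow> a \<oplus> x = a \<oplus> y \<Longrightarrow> x = y"
  using left_gyroassoc[of "\<ominus> a" a x] left_gyroassoc[of "\<ominus> a" a y] gyr_inj[of "\<ominus> a" a x y]
  by (simp add: neg_in neg_left zero_left gyr_in)

lemma gyr_zero_left: "a \<in> G \<Longrightarrow> w \<in> G \<Longrightarrow> gyr \<zero> a w = w"
  using left_gyroassoc[of \<zero> a w] add_left_imp_eq[of a w "gyr \<zero> a w"]
  by (simp add: zero_in zero_left add_closed gyr_in)

text \<open>By the left loop property the gyration in the left gyroassociative law
  for \<open>\<ominus> a \<oplus> (a \<oplus> b)\<close> is \<open>gyr \<zero> a\<close>, the identity.\<close>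
lemma neg_add_cancel_left: "a \<in> G \<Longrightarrow> b \<in> G \<Longrightarrow> \<ominus> a \<oplus> (a \<oplus> b) = b"
  using left_gyroassoc[of "\<ominus> a" a b] left_loop[of "\<ominus> a" a b] gyr_zero_left[of a b]
  by (simp add: neg_in neg_left zero_left gyr_in)

lemma add_neg_cancel_left: "a \<in> G \<Longrightarrow> b \<in> G \<Longrightarrow> a \<oplus> (\<ominus> a \<oplus> b) = b"
  using neg_add_cancel_left[of a "\<ominus> a \<oplus> (a \<oplus> (\<ominus> a \<oplus> b))"] neg_add_cancel_left[of a "\<ominus> a \<oplus> b"]
    add_left_imp_eq[of "\<ominus> a" "a \<oplus> (\<ominus> a \<oplus> b)" b]
  by (simp add: neg_in add_closed)

lemma neg_add_eq_zero_iff: "a \<in> G \<Longrightarrow> b \<in> G \<Longrightarrow> \<ominus> a \<oplus> b = \<zero> \<longleftrightarrow> a = b"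
  using add_neg_cancel_left[of a b] by (auto simp: zero_right neg_left)

lemma gyro_aut_zero:
  assumes "gyro_aut G (\<oplus>) \<phi>"
  shows "\<phi> \<zero> = \<zero>"
proof -
  have \<phi>_in: "\<phi> \<zero> \<in> G" using assms zero_in unfolding gyro_aut_def by (meson bij_betw_apply)
  have "\<phi> \<zero> \<oplus> \<phi> \<zero> = \<phi> (\<zero> \<oplus> \<zero>)" using assms zero_in unfolding gyro_aut_def by simp
  also have "\<dots> = \<phi> \<zero> \<oplus> \<zero>" using zero_left zero_right zero_in \<phi>_in by simp
  finally show ?thesis using add_left_imp_eq \<phi>_in zero_in by blast
qed

end

lemma finite_uniform_square_nbhd:
  assumes "finite A" "openin Y V" "z \<in> topspace X"
    and cont: "\<And>a. a \<in> A \<Longrightarrow> continuous_map (prod_topology X X) Y (\<Phi> a)"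
    and at_z: "\<And>a. a \<in> A \<Longrightarrow> \<Phi> a (z, z) \<in> V"
  obtains W where "openin X W" "z \<in> W" "\<And>a x y. a \<in> A \<Longrightarrow> x \<in> W \<Longrightarrow> y \<in> W \<Longrightarrow> \<Phi> a (x, y) \<in> V"
proof -
  define N where "N = (\<Inter>a\<in>A. {p \<in> topspace (prod_topology X X). \<Phi> a p \<in> V}) \<inter> topspace (prod_topology X X)"
  have "openin (prod_topology X X) N"
    unfolding N_def using assms(1,2) cont by (intro openin_INT openin_continuous_map_preimage)
  moreover have "(z, z) \<in> N" unfolding N_def using assms(3) at_z by (simp add: topspace_prod_topology)
  ultimately obtain U1 U2 where "openin X U1" "openin X U2" "z \<in> U1" "z \<in> U2" "U1 \<times> U2 \<subseteq> N"
    by (metis openin_prod_topology_alt)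
  then show ?thesis
    by (intro that[of "U1 \<inter> U2"]) (auto simp: N_def)
qed

locale topological_gyrogroup_on = gyrogroup_on "topspace T" gop
  for T :: "'a topology" and gop :: "'a \<Rightarrow> 'a \<Rightarrow> 'a" (infixl "\<oplus>" 65) +
  assumes topological_gyrogroup: "topological_gyrogroup T (\<oplus>)"
begin

text \<open>The notation of gyrogroup_on does not survive the instantiation of its carrier by
  \<open>topspace T\<close>, so it is declared again.\<close>
abbreviation tg_zero :: 'a ("\<zero>") where "\<zero> \<equiv> gzero (topspace T) (\<oplus>)"
abbreviation tg_neg :: "'a \<Rightarrow> 'a" ("\<ominus> _" [81] 80) where "\<ominus> x \<equiv> ginv (topspace T) (\<oplus>) x"

lemma t1_space: "t1_space T"
  using topological_gyrogroup unfolding topological_gyrogroup_def by blast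

lemma continuous_map_add:
  "continuous_map X T p \<Longrightarrow> continuous_map X T q \<Longrightarrow> continuous_map X T (\<lambda>x. p x \<oplus> q x)"
  using continuous_map_compose[OF continuous_map_pairedI, of X T p T q T "\<lambda>(x, y). x \<oplus> y"]
    topological_gyrogroup unfolding topological_gyrogroup_def by (simp add: o_def)

lemma continuous_map_neg: "continuous_map X T p \<Longrightarrow> continuous_map X T (\<lambda>x. \<ominus> p x)"
  using continuous_map_compose[of X T p T "ginv (topspace T) (\<oplus>)"]
    topological_gyrogroup unfolding topological_gyrogroup_def by (simp add: o_def)

subsection \<open>The gyrogroup of step functions\<close>

abbreviation Gstep :: "(real \<Rightarrow> 'a) set" where "Gstep \<equiv> stepfuns (topspace T) (\<oplus>)"
abbreviation step_add :: "(real \<Rightarrow> 'a) \<Rightarrow> (real \<Rightarrow> 'a) \<Rightarrow> (real \<Rightarrow> 'a)" (infixl "\<oplus>\<^sup>\<bullet>" 65)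
  where "f \<oplus>\<^sup>\<bullet> g \<equiv> stepop (\<oplus>) f g"
abbreviation step_zero :: "real \<Rightarrow> 'a" ("\<zero>\<^sup>\<bullet>") where "\<zero>\<^sup>\<bullet> \<equiv> (\<lambda>r. \<zero>)"

lemma step_value_in: "f \<in> Gstep \<Longrightarrow> f r \<in> topspace T"
  using stepfuns_value_in[of f _ _ r] stepfuns_outside[of f _ _ r] zero_in
  by (cases "r \<in> {0..<1}") auto

lemma step_zero_in: "\<zero>\<^sup>\<bullet> \<in> Gstep"
  by (rule stepfuns_const_zero[OF zero_in])

lemma step_add_in: "f \<in> Gstep \<Longrightarrow> g \<in> Gstep \<Longrightarrow> f \<oplus>\<^sup>\<bullet> g \<in> Gstep"
  unfolding stepop_def by (rule stepfuns_map2) (simp_all add: add_closed zero_left zero_in)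

lemma step_neg_in: "f \<in> Gstep \<Longrightarrow> (\<lambda>r. \<ominus> f r) \<in> Gstep"
  by (rule stepfuns_map) (simp_all add: neg_in neg_zero)

lemma step_diff_in: "f \<in> Gstep \<Longrightarrow> u \<in> Gstep \<Longrightarrow> (\<lambda>r. \<ominus> f r \<oplus> u r) \<in> Gstep"
  by (rule stepfuns_map2[where F = "\<lambda>x y. \<ominus> x \<oplus> y"])
    (simp_all add: add_closed neg_in neg_zero zero_left zero_in)

lemma step_add_zero_left: "f \<in> Gstep \<Longrightarrow> \<zero>\<^sup>\<bullet> \<oplus>\<^sup>\<bullet> f = f"
  and step_add_zero_right: "f \<in> Gstep \<Longrightarrow> f \<oplus>\<^sup>\<bullet> \<zero>\<^sup>\<bullet> = f"
  unfolding stepop_def by (simp_all add: fun_eq_iff zero_left zero_right step_value_in)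

lemma ex1_step_zero: "\<exists>!e. e \<in> Gstep \<and> (\<forall>f\<in>Gstep. e \<oplus>\<^sup>\<bullet> f = f \<and> f \<oplus>\<^sup>\<bullet> e = f)"
proof (rule ex1I[of _ "\<zero>\<^sup>\<bullet>"])
  show "\<zero>\<^sup>\<bullet> \<in> Gstep \<and> (\<forall>f\<in>Gstep. \<zero>\<^sup>\<bullet> \<oplus>\<^sup>\<bullet> f = f \<and> f \<oplus>\<^sup>\<bullet> \<zero>\<^sup>\<bullet> = f)"
    using step_zero_in step_add_zero_left step_add_zero_right by blast
next
  fix e assume "e \<in> Gstep \<and> (\<forall>f\<in>Gstep. e \<oplus>\<^sup>\<bullet> f = f \<and> f \<oplus>\<^sup>\<bullet> e = f)"
  then show "e = \<zero>\<^sup>\<bullet>" using step_add_zero_right[of e] step_zero_in by metis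
qed

lemma gzero_Gstep: "gzero Gstep (\<oplus>\<^sup>\<bullet>) = \<zero>\<^sup>\<bullet>"
  unfolding gzero_def[of Gstep]
  by (rule the1_equality[OF ex1_step_zero]) (use step_zero_in step_add_zero_left step_add_zero_right in blast)

lemma ex1_step_neg:
  assumes "f \<in> Gstep"
  shows "\<exists>!g. g \<in> Gstep \<and> g \<oplus>\<^sup>\<bullet> f = \<zero>\<^sup>\<bullet> \<and> f \<oplus>\<^sup>\<bullet> g = \<zero>\<^sup>\<bullet>"
proof (rule ex1I[of _ "\<lambda>r. \<ominus> f r"])
  show "(\<lambda>r. \<ominus> f r) \<in> Gstep \<and> (\<lambda>r. \<ominus> f r) \<oplus>\<^sup>\<bullet> f = \<zero>\<^sup>\<bullet> \<and> f \<oplus>\<^sup>\<bullet> (\<lambda>r. \<ominus> f r) = \<zero>\<^sup>\<bullet>"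
    using step_neg_in[OF assms] unfolding stepop_def
    by (simp add: fun_eq_iff neg_left neg_right step_value_in assms)
next
  fix g assume g: "g \<in> Gstep \<and> g \<oplus>\<^sup>\<bullet> f = \<zero>\<^sup>\<bullet> \<and> f \<oplus>\<^sup>\<bullet> g = \<zero>\<^sup>\<bullet>"
  show "g = (\<lambda>r. \<ominus> f r)"
  proof
    fix r
    have "g r \<oplus> f r = \<zero>" "f r \<oplus> g r = \<zero>"
      using g unfolding stepop_def by (metis fun_cong)+
    then show "g r = \<ominus> f r" using neg_unique step_value_in assms g by metis
  qed
qed

lemma ginv_Gstep: "f \<in> Gstep \<Longrightarrow> ginv Gstep (\<oplus>\<^sup>\<bullet>) f = (\<lambda>r. \<ominus> f r)"
  unfolding ginv_def[of Gstep] gzero_Gstep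
  by (rule the1_equality[OF ex1_step_neg])
    (simp_all add: step_neg_in stepop_def fun_eq_iff neg_left neg_right step_value_in)

definition step_gyr :: "(real \<Rightarrow> 'a) \<Rightarrow> (real \<Rightarrow> 'a) \<Rightarrow> (real \<Rightarrow> 'a) \<Rightarrow> real \<Rightarrow> 'a" where
  "step_gyr f g h = (\<lambda>r. gyr (f r) (g r) (h r))"

lemma step_gyr_in: "f \<in> Gstep \<Longrightarrow> g \<in> Gstep \<Longrightarrow> h \<in> Gstep \<Longrightarrow> step_gyr f g h \<in> Gstep"
  unfolding step_gyr_def
  by (rule stepfuns_map3) (simp_all add: gyr_in zero_in gyro_aut_zero gyr_aut)

lemma surj_step_gyr:
  assumes "f \<in> Gstep" "g \<in> Gstep" "h \<in> Gstep"
  shows "h \<in> step_gyr f g ` Gstep"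
proof -
  define inv_gyr where "inv_gyr a b = inv_into (topspace T) (gyr a b)" for a b
  have bij: "bij_betw (gyr a b) (topspace T) (topspace T)" if "a \<in> topspace T" "b \<in> topspace T" for a b
    using gyr_aut[OF that] unfolding gyro_aut_def by blast
  have "(\<lambda>r. inv_gyr (f r) (g r) (h r)) \<in> Gstep"
  proof (rule stepfuns_map3[OF assms])
    show "\<forall>a\<in>topspace T. \<forall>b\<in>topspace T. \<forall>c\<in>topspace T. inv_gyr a b c \<in> topspace T"
      unfolding inv_gyr_def using bij by (meson bij_betw_apply bij_betw_inv_into)
    show "inv_gyr \<zero> \<zero> \<zero> = \<zero>"
      unfolding inv_gyr_def using bij[OF zero_in zero_in] gyro_aut_zero[OF gyr_aut[OF zero_in zero_in]]
      by (metis bij_betw_inv_into_left zero_in)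
  qed
  moreover have "step_gyr f g (\<lambda>r. inv_gyr (f r) (g r) (h r)) = h"
    unfolding step_gyr_def inv_gyr_def
    using bij[OF step_value_in[OF assms(1)] step_value_in[OF assms(2)]] step_value_in[OF assms(3)]
    by (simp add: fun_eq_iff bij_betw_inv_into_right[of "gyr _ _" "topspace T" "topspace T"])
  ultimately show ?thesis by (metis image_eqI)
qed

lemma gyro_aut_step_gyr:
  assumes "f \<in> Gstep" "g \<in> Gstep"
  shows "gyro_aut Gstep (\<oplus>\<^sup>\<bullet>) (step_gyr f g)"
  unfolding gyro_aut_def bij_betw_def
proof (intro conjI ballI)
  show "inj_on (step_gyr f g) Gstep"
    unfolding step_gyr_def
    by (rule inj_onI) (metis fun_eq_iff gyr_inj step_value_in assms)
  show "step_gyr f g ` Gstep = Gstep"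
    using step_gyr_in[OF assms] surj_step_gyr[OF assms] by blast
  show "step_gyr f g (u \<oplus>\<^sup>\<bullet> v) = step_gyr f g u \<oplus>\<^sup>\<bullet> step_gyr f g v" if "u \<in> Gstep" "v \<in> Gstep" for u v
    using gyr_aut[OF step_value_in[OF assms(1)] step_value_in[OF assms(2)]] step_value_in that
    unfolding step_gyr_def stepop_def gyro_aut_def by (simp add: fun_eq_iff)
qed

lemma gyrogroup_Gstep: "gyrogroup Gstep (\<oplus>\<^sup>\<bullet>)"
  unfolding gyrogroup_def
proof (intro conjI)
  show "\<forall>f\<in>Gstep. \<forall>g\<in>Gstep. f \<oplus>\<^sup>\<bullet> g \<in> Gstep" using step_add_in by blast
  show "\<exists>!e. e \<in> Gstep \<and> (\<forall>f\<in>Gstep. e \<oplus>\<^sup>\<bullet> f = f \<and> f \<oplus>\<^sup>\<bullet> e = f)" by (rule ex1_step_zero)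
  show "\<forall>e\<in>Gstep. (\<forall>f\<in>Gstep. e \<oplus>\<^sup>\<bullet> f = f \<and> f \<oplus>\<^sup>\<bullet> e = f) \<longrightarrow>
      (\<forall>f\<in>Gstep. \<exists>!g. g \<in> Gstep \<and> g \<oplus>\<^sup>\<bullet> f = e \<and> f \<oplus>\<^sup>\<bullet> g = e)"
    using ex1_step_neg ex1_step_zero step_zero_in step_add_zero_left step_add_zero_right by metis
  show "\<exists>gyr. (\<forall>f\<in>Gstep. \<forall>g\<in>Gstep. gyro_aut Gstep (\<oplus>\<^sup>\<bullet>) (gyr f g)) \<and>
      (\<forall>f\<in>Gstep. \<forall>g\<in>Gstep. \<forall>h\<in>Gstep. f \<oplus>\<^sup>\<bullet> (g \<oplus>\<^sup>\<bullet> h) = (f \<oplus>\<^sup>\<bullet> g) \<oplus>\<^sup>\<bullet> gyr f g h) \<and>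
      (\<forall>f\<in>Gstep. \<forall>g\<in>Gstep. \<forall>h\<in>Gstep. gyr (f \<oplus>\<^sup>\<bullet> g) g h = gyr f g h)"
    using gyro_aut_step_gyr left_gyroassoc left_loop step_value_in
    by (intro exI[of _ step_gyr]) (simp add: step_gyr_def stepop_def fun_eq_iff)
qed

subsection \<open>The topology of convergence in measure\<close>

text \<open>\<open>nbhd f V \<epsilon>\<close> is the paper's \<open>f \<oplus>\<^sup>\<bullet> O(V, \<epsilon>)\<close> (lemma translate_Onbhd), described
  without reference to the translation by f.\<close>
definition deviation :: "'a set \<Rightarrow> (real \<Rightarrow> 'a) \<Rightarrow> (real \<Rightarrow> 'a) \<Rightarrow> real" where
  "deviation V f u = measure lebesgue {r \<in> {0..<1}. \<ominus> f r \<oplus> u r \<notin> V}"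

definition nbhd :: "(real \<Rightarrow> 'a) \<Rightarrow> 'a set \<Rightarrow> real \<Rightarrow> (real \<Rightarrow> 'a) set" where
  "nbhd f V \<epsilon> = {u \<in> Gstep. deviation V f u < \<epsilon>}"

lemma deviation_set_lmeasurable:
  "f \<in> Gstep \<Longrightarrow> u \<in> Gstep \<Longrightarrow> {r \<in> {0..<1}. \<ominus> f r \<oplus> u r \<notin> V} \<in> lmeasurable"
  using stepfuns_level_set_lmeasurable[OF step_diff_in, of f u "\<lambda>x. x \<notin> V"] by simp

lemma measure_le_add_of_subset_Un:
  assumes "X \<subseteq> Y \<union> Z" "X \<in> lmeasurable" "Y \<in> lmeasurable" "Z \<in> lmeasurable"
  shows "measure lebesgue X \<le> measure lebesgue Y + measure lebesgue Z"
proof -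
  have "measure lebesgue X \<le> measure lebesgue (Y \<union> Z)"
    using assms by (intro measure_mono_fmeasurable) auto
  also have "\<dots> \<le> measure lebesgue Y + measure lebesgue Z"
    using assms by (intro measure_Un_le) auto
  finally show ?thesis .
qed

lemma deviation_le_add:
  assumes "f \<in> Gstep" "u \<in> Gstep" "g \<in> Gstep" "v \<in> Gstep" "f' \<in> Gstep" "u' \<in> Gstep"
    and "\<And>r. r \<in> {0..<1} \<Longrightarrow> \<ominus> f r \<oplus> u r \<in> W \<Longrightarrow> \<ominus> g r \<oplus> v r \<in> W' \<Longrightarrow>
      \<ominus> f' r \<oplus> u' r \<in> V"
  shows "deviation V f' u' \<le> deviation W f u + deviation W' g v"
  unfolding deviation_def
  by (rule measure_le_add_of_subset_Un) (use assms deviation_set_lmeasurable in auto)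

lemma deviation_le:
  assumes "f \<in> Gstep" "u \<in> Gstep" "f' \<in> Gstep" "u' \<in> Gstep"
    and "\<And>r. r \<in> {0..<1} \<Longrightarrow> \<ominus> f r \<oplus> u r \<in> W \<Longrightarrow> \<ominus> f' r \<oplus> u' r \<in> V"
  shows "deviation V f' u' \<le> deviation W f u"
  using deviation_le_add[OF assms(1,2,1,2,3,4), of W UNIV V] assms(5)
  by (simp add: deviation_def)

lemma deviation_self: "f \<in> Gstep \<Longrightarrow> \<zero> \<in> V \<Longrightarrow> deviation V f f = 0"
  unfolding deviation_def by (simp add: neg_left step_value_in)

lemma nbhd_subset: "nbhd f V \<epsilon> \<subseteq> Gstep"
  unfolding nbhd_def by blast

lemma mem_nbhd_self: "f \<in> Gstep \<Longrightarrow> \<zero> \<in> V \<Longrightarrow> \<epsilon> > 0 \<Longrightarrow> f \<in> nbhd f V \<epsilon>"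
  unfolding nbhd_def by (simp add: deviation_self)

lemma nbhd_mono:
  assumes "f \<in> Gstep" "V' \<subseteq> V" "\<epsilon>' \<le> \<epsilon>"
  shows "nbhd f V' \<epsilon>' \<subseteq> nbhd f V \<epsilon>"
proof
  fix u assume "u \<in> nbhd f V' \<epsilon>'"
  moreover have "deviation V f u \<le> deviation V' f u" if "u \<in> Gstep"
    using assms(1,2) that by (intro deviation_le) auto
  ultimately show "u \<in> nbhd f V \<epsilon>" using assms(3) unfolding nbhd_def by fastforce
qed

lemma translate_Onbhd:
  assumes "f \<in> Gstep"
  shows "(\<oplus>\<^sup>\<bullet>) f ` Onbhd (topspace T) (\<oplus>) V \<epsilon> = nbhd f V \<epsilon>"
proof (intro equalityI subsetI)
  fix u assume "u \<in> (\<oplus>\<^sup>\<bullet>) f ` Onbhd (topspace T) (\<oplus>) V \<epsilon>"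
  then obtain w where w: "w \<in> Gstep" "measure lebesgue {r \<in> {0..<1}. w r \<notin> V} < \<epsilon>"
    and u: "u = f \<oplus>\<^sup>\<bullet> w"
    unfolding Onbhd_def by blast
  have "deviation V f u = measure lebesgue {r \<in> {0..<1}. w r \<notin> V}"
    unfolding deviation_def u stepop_def
    by (simp add: neg_add_cancel_left step_value_in assms w(1))
  then show "u \<in> nbhd f V \<epsilon>" unfolding nbhd_def using step_add_in[OF assms w(1)] w u by simp
next
  fix u assume u: "u \<in> nbhd f V \<epsilon>"
  define w where "w = (\<lambda>r. \<ominus> f r \<oplus> u r)"
  have u_in: "u \<in> Gstep" using u unfolding nbhd_def by blast
  have "u = f \<oplus>\<^sup>\<bullet> w"
    unfolding stepop_def w_def by (simp add: add_neg_cancel_left step_value_in assms u_in)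
  moreover have "w \<in> Onbhd (topspace T) (\<oplus>) V \<epsilon>"
    using u step_diff_in[OF assms u_in] unfolding Onbhd_def nbhd_def deviation_def w_def by simp
  ultimately show "u \<in> (\<oplus>\<^sup>\<bullet>) f ` Onbhd (topspace T) (\<oplus>) V \<epsilon>" by blast
qed

lemma nbhd_refine:
  assumes f: "f \<in> Gstep" and g: "g \<in> nbhd f V \<epsilon>" and V: "openin T V"
  shows "\<exists>W \<delta>. openin T W \<and> \<zero> \<in> W \<and> \<delta> > 0 \<and> nbhd g W \<delta> \<subseteq> nbhd f V \<epsilon>"
proof -
  have g_in: "g \<in> Gstep" using g nbhd_subset by blast
  define A where "A = {(a, b) \<in> f ` {0..<1} \<times> g ` {0..<1}. \<ominus> a \<oplus> b \<in> V}"
  have "finite A"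
    by (rule finite_subset[of _ "f ` {0..<1} \<times> g ` {0..<1}"])
      (auto simp: A_def stepfuns_finite_image[OF f] stepfuns_finite_image[OF g_in])
  then obtain W where W: "openin T W" "\<zero> \<in> W"
    and WA: "\<And>a b x. (a, b) \<in> A \<Longrightarrow> x \<in> W \<Longrightarrow> \<ominus> a \<oplus> (b \<oplus> x) \<in> V"
  proof (rule finite_uniform_square_nbhd[OF _ V zero_in, of A "\<lambda>(a, b) p. \<ominus> a \<oplus> (b \<oplus> fst p)"])
    fix p assume "p \<in> A"
    then obtain a b where p: "p = (a, b)" "a \<in> topspace T" "b \<in> topspace T" "\<ominus> a \<oplus> b \<in> V"
      unfolding A_def using step_value_in f g_in by blast
    then show "continuous_map (prod_topology T T) T ((\<lambda>(a, b) p. \<ominus> a \<oplus> (b \<oplus> fst p)) p)"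
      by (auto intro!: continuous_map_add continuous_map_fst simp: neg_in)
    show "(\<lambda>(a, b) p. \<ominus> a \<oplus> (b \<oplus> fst p)) p (\<zero>, \<zero>) \<in> V"
      using p by (simp add: zero_right)
  qed (use that in fastforce)
  define \<delta> where "\<delta> = \<epsilon> - deviation V f g"
  have "nbhd g W \<delta> \<subseteq> nbhd f V \<epsilon>"
  proof
    fix u assume u: "u \<in> nbhd g W \<delta>"
    then have u_in: "u \<in> Gstep" using nbhd_subset by blast
    have "deviation V f u \<le> deviation V f g + deviation W g u"
    proof (rule deviation_le_add[OF f g_in g_in u_in f u_in])
      fix r :: real assume r: "r \<in> {0..<1}" "\<ominus> f r \<oplus> g r \<in> V" "\<ominus> g r \<oplus> u r \<in> W"
      then have "(f r, g r) \<in> A" unfolding A_def by blast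
      then have "\<ominus> f r \<oplus> (g r \<oplus> (\<ominus> g r \<oplus> u r)) \<in> V" using WA r(3) by blast
      then show "\<ominus> f r \<oplus> u r \<in> V" by (simp add: add_neg_cancel_left step_value_in g_in u_in)
    qed
    then show "u \<in> nbhd f V \<epsilon>" using u u_in unfolding nbhd_def \<delta>_def by simp
  qed
  moreover have "\<delta> > 0" using g unfolding nbhd_def \<delta>_def by simp
  ultimately show ?thesis using W by blast
qed

definition step_open :: "(real \<Rightarrow> 'a) set \<Rightarrow> bool" where
  "step_open U \<longleftrightarrow> U \<subseteq> Gstep \<and>
     (\<forall>f\<in>U. \<exists>V \<epsilon>. openin T V \<and> \<zero> \<in> V \<and> \<epsilon> > 0 \<and> nbhd f V \<epsilon> \<subseteq> U)"

lemma istopology_step_open: "istopology step_open"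
  unfolding istopology_def
proof (intro conjI allI impI)
  fix U U' assume U: "step_open U" and U': "step_open U'"
  show "step_open (U \<inter> U')"
    unfolding step_open_def
  proof (intro conjI ballI)
    show "U \<inter> U' \<subseteq> Gstep" using U unfolding step_open_def by blast
    fix f assume f: "f \<in> U \<inter> U'"
    then have f_in: "f \<in> Gstep" using U unfolding step_open_def by blast
    obtain V \<epsilon> where V: "openin T V" "\<zero> \<in> V" "\<epsilon> > 0" "nbhd f V \<epsilon> \<subseteq> U"
      using U f unfolding step_open_def by blast
    obtain V' \<epsilon>' where V': "openin T V'" "\<zero> \<in> V'" "\<epsilon>' > 0" "nbhd f V' \<epsilon>' \<subseteq> U'"
      using U' f unfolding step_open_def by blast
    have "nbhd f (V \<inter> V') (min \<epsilon> \<epsilon>') \<subseteq> U \<inter> U'"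
      using nbhd_mono[OF f_in, of "V \<inter> V'" V "min \<epsilon> \<epsilon>'" \<epsilon>] nbhd_mono[OF f_in, of "V \<inter> V'" V' "min \<epsilon> \<epsilon>'" \<epsilon>']
        V(4) V'(4) by auto
    then show "\<exists>V \<epsilon>. openin T V \<and> \<zero> \<in> V \<and> \<epsilon> > 0 \<and> nbhd f V \<epsilon> \<subseteq> U \<inter> U'"
      using V V' by (intro exI[of _ "V \<inter> V'"] exI[of _ "min \<epsilon> \<epsilon>'"]) auto
  qed
next
  fix \<U> assume "\<forall>U\<in>\<U>. step_open U"
  then show "step_open (\<Union>\<U>)" unfolding step_open_def by (meson Sup_upper order.trans Union_iff Union_least)
qed

definition step_topology :: "(real \<Rightarrow> 'a) topology" where
  "step_topology = topology step_open"

lemma openin_step_topology: "openin step_topology = step_open"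
  unfolding step_topology_def using istopology_step_open by simp

lemma topspace_step_topology: "topspace step_topology = Gstep"
proof
  show "topspace step_topology \<subseteq> Gstep"
    unfolding topspace_def openin_step_topology step_open_def by blast
  have "step_open Gstep"
    unfolding step_open_def using nbhd_subset zero_in by (blast intro: zero_less_one)
  then show "Gstep \<subseteq> topspace step_topology"
    by (metis openin_step_topology openin_subset)
qed

lemma openin_nbhd:
  assumes "f \<in> Gstep" "openin T V"
  shows "openin step_topology (nbhd f V \<epsilon>)"
  unfolding openin_step_topology step_open_def
  using nbhd_subset nbhd_refine[OF assms(1) _ assms(2)] by (intro conjI ballI) auto

lemma local_base_at_nbhd:
  assumes "f \<in> Gstep"
  shows "local_base_at step_topology {nbhd f V \<epsilon> | V \<epsilon>. openin T V \<and> \<zero> \<in> V \<and> \<epsilon> > 0} f"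
  unfolding local_base_at_def
proof (intro conjI ballI allI impI)
  fix B assume "B \<in> {nbhd f V \<epsilon> | V \<epsilon>. openin T V \<and> \<zero> \<in> V \<and> \<epsilon> > 0}"
  then obtain V \<epsilon> where "B = nbhd f V \<epsilon>" "openin T V" "\<zero> \<in> V" "\<epsilon> > 0" by blast
  then show "openin step_topology B" "f \<in> B"
    using openin_nbhd[OF assms] mem_nbhd_self[OF assms] by simp_all
next
  fix U assume "openin step_topology U \<and> f \<in> U"
  then obtain V \<epsilon> where "openin T V" "\<zero> \<in> V" "\<epsilon> > 0" "nbhd f V \<epsilon> \<subseteq> U"
    unfolding openin_step_topology step_open_def by blast
  then show "\<exists>B\<in>{nbhd f V \<epsilon> | V \<epsilon>. openin T V \<and> \<zero> \<in> V \<and> \<epsilon> > 0}. B \<subseteq> U" by blast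
qed

lemma finite_separating_nbhd:
  assumes "finite A" "\<And>a b. (a, b) \<in> A \<Longrightarrow> a \<in> topspace T \<and> b \<in> topspace T \<and> a \<noteq> b"
  obtains W where "openin T W" "\<zero> \<in> W"
    "\<And>a b x y. (a, b) \<in> A \<Longrightarrow> x \<in> W \<Longrightarrow> y \<in> W \<Longrightarrow> a \<oplus> x \<noteq> b \<oplus> y"
proof -
  have "openin T (topspace T - {\<zero>})"
    using t1_space by (simp add: t1_space_openin_delete_alt)
  then obtain W where W: "openin T W" "\<zero> \<in> W"
    and WA: "\<And>a b x y. (a, b) \<in> A \<Longrightarrow> x \<in> W \<Longrightarrow> y \<in> W \<Longrightarrow> \<ominus> y \<oplus> (\<ominus> b \<oplus> (a \<oplus> x)) \<noteq> \<zero>"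
  proof (rule finite_uniform_square_nbhd[OF assms(1) _ zero_in,
        where \<Phi> = "\<lambda>(a, b) p. \<ominus> snd p \<oplus> (\<ominus> b \<oplus> (a \<oplus> fst p))"])
    fix p assume "p \<in> A"
    then obtain a b where p: "p = (a, b)" "a \<in> topspace T" "b \<in> topspace T" "a \<noteq> b"
      using assms(2) by (cases p) blast
    then show "continuous_map (prod_topology T T) T ((\<lambda>(a, b) p. \<ominus> snd p \<oplus> (\<ominus> b \<oplus> (a \<oplus> fst p))) p)"
      by (auto intro!: continuous_map_add continuous_map_neg continuous_map_fst continuous_map_snd
          simp: neg_in)
    show "(\<lambda>(a, b) p. \<ominus> snd p \<oplus> (\<ominus> b \<oplus> (a \<oplus> fst p))) p (\<zero>, \<zero>) \<in> topspace T - {\<zero>}"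
      using p by (simp add: zero_right neg_zero zero_left neg_add_eq_zero_iff add_closed neg_in)
  qed (use that in fastforce)
  have "a \<oplus> x \<noteq> b \<oplus> y" if "(a, b) \<in> A" "x \<in> W" "y \<in> W" for a b x y
  proof
    assume "a \<oplus> x = b \<oplus> y"
    moreover have "x \<in> topspace T" "y \<in> topspace T" using W(1) that openin_subset by blast+
    ultimately have "\<ominus> y \<oplus> (\<ominus> b \<oplus> (a \<oplus> x)) = \<zero>"
      using assms(2)[OF that(1)] by (simp add: neg_add_cancel_left neg_left)
    then show False using WA that by blast
  qed
  then show ?thesis using W that by blast
qed

lemma deviation_pos_of_ne:
  assumes "f \<in> Gstep" "g \<in> Gstep" "f \<noteq> g"
  shows "deviation {\<zero>} f g > 0"
proof -
  obtain r where r: "f r \<noteq> g r" using assms(3) by (meson ext)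
  then have "r \<in> {0..<1}" using stepfuns_outside[OF assms(1)] stepfuns_outside[OF assms(2)] by metis
  moreover have "\<ominus> f r \<oplus> g r \<notin> {\<zero>}"
    using r by (simp add: neg_add_eq_zero_iff step_value_in assms(1,2))
  ultimately show ?thesis
    unfolding deviation_def
    using stepfuns_level_set_measure_pos[OF step_diff_in[OF assms(1,2)], of r "\<lambda>x. x \<notin> {\<zero>}"]
    by simp
qed

text \<open>\<open>deviation {\<zero>} f g\<close> is the measure of the set where f and g differ; if u were close
  to both, this set would be covered by the two sets where u is far from f and from g.\<close>
lemma Hausdorff_space_step_topology: "Hausdorff_space step_topology"
  unfolding Hausdorff_space_def topspace_step_topology
proof (intro allI impI)
  fix f g assume "f \<in> Gstep \<and> g \<in> Gstep \<and> f \<noteq> g"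
  then have f: "f \<in> Gstep" and g: "g \<in> Gstep" and m: "deviation {\<zero>} f g > 0"
    using deviation_pos_of_ne by auto
  define A where "A = {(a, b) \<in> f ` {0..<1} \<times> g ` {0..<1}. a \<noteq> b}"
  have "finite A"
    by (rule finite_subset[of _ "f ` {0..<1} \<times> g ` {0..<1}"])
      (auto simp: A_def stepfuns_finite_image[OF f] stepfuns_finite_image[OF g])
  then obtain W where W: "openin T W" "\<zero> \<in> W"
    and WA: "\<And>a b x y. (a, b) \<in> A \<Longrightarrow> x \<in> W \<Longrightarrow> y \<in> W \<Longrightarrow> a \<oplus> x \<noteq> b \<oplus> y"
    by (rule finite_separating_nbhd) (auto simp: A_def step_value_in f g)
  have "disjnt (nbhd f W (deviation {\<zero>} f g / 2)) (nbhd g W (deviation {\<zero>} f g / 2))"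
    unfolding disjnt_iff
  proof (intro allI notI)
    fix u assume u: "u \<in> nbhd f W (deviation {\<zero>} f g / 2) \<and> u \<in> nbhd g W (deviation {\<zero>} f g / 2)"
    then have u_in: "u \<in> Gstep" using nbhd_subset by blast
    have "deviation {\<zero>} f g \<le> deviation W f u + deviation W g u"
    proof (rule deviation_le_add[OF f u_in g u_in f g])
      fix r :: real assume r: "r \<in> {0..<1}" "\<ominus> f r \<oplus> u r \<in> W" "\<ominus> g r \<oplus> u r \<in> W"
      have "f r \<oplus> (\<ominus> f r \<oplus> u r) = g r \<oplus> (\<ominus> g r \<oplus> u r)"
        by (simp add: add_neg_cancel_left step_value_in f g u_in)
      then have "(f r, g r) \<notin> A" using WA r(2,3) by blast
      then show "\<ominus> f r \<oplus> g r \<in> {\<zero>}" using r(1) by (auto simp: A_def neg_left step_value_in g)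
    qed
    then show False using u unfolding nbhd_def by simp
  qed
  then show "\<exists>U V. openin step_topology U \<and> openin step_topology V \<and> f \<in> U \<and> g \<in> V \<and> disjnt U V"
    using openin_nbhd f g W mem_nbhd_self m by (meson half_gt_zero)
qed

lemma continuous_map_step_topology_prodI:
  assumes closed: "\<And>f g. f \<in> Gstep \<Longrightarrow> g \<in> Gstep \<Longrightarrow> F f g \<in> Gstep"
    and cont: "\<And>f g V \<epsilon>. f \<in> Gstep \<Longrightarrow> g \<in> Gstep \<Longrightarrow> openin T V \<Longrightarrow> \<zero> \<in> V \<Longrightarrow> \<epsilon> > 0 \<Longrightarrow>
      \<exists>W \<delta>. openin T W \<and> \<zero> \<in> W \<and> \<delta> > 0 \<and>
        (\<forall>u\<in>nbhd f W \<delta>. \<forall>v\<in>nbhd g W \<delta>. F u v \<in> nbhd (F f g) V \<epsilon>)"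
  shows "continuous_map (prod_topology step_topology step_topology) step_topology (\<lambda>(f, g). F f g)"
  unfolding continuous_map_def topspace_prod_topology topspace_step_topology
proof (intro conjI allI impI)
  show "(\<lambda>(f, g). F f g) \<in> Gstep \<times> Gstep \<rightarrow> Gstep" using closed by auto
  fix U assume "openin step_topology U"
  then have U: "step_open U" by (simp add: openin_step_topology)
  show "openin (prod_topology step_topology step_topology) {p \<in> Gstep \<times> Gstep. (\<lambda>(f, g). F f g) p \<in> U}"
    unfolding openin_prod_topology_alt
  proof (intro allI impI)
    fix f g assume "(f, g) \<in> {p \<in> Gstep \<times> Gstep. (\<lambda>(f, g). F f g) p \<in> U}"
    then have f: "f \<in> Gstep" and g: "g \<in> Gstep" and "F f g \<in> U" by auto
    then obtain V \<epsilon> where V: "openin T V" "\<zero> \<in> V" "\<epsilon> > 0" "nbhd (F f g) V \<epsilon> \<subseteq> U"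
      using U unfolding step_open_def by blast
    obtain W \<delta> where W: "openin T W" "\<zero> \<in> W" "\<delta> > 0"
      and WV: "\<forall>u\<in>nbhd f W \<delta>. \<forall>v\<in>nbhd g W \<delta>. F u v \<in> nbhd (F f g) V \<epsilon>"
      using cont[OF f g V(1-3)] by blast
    have "nbhd f W \<delta> \<times> nbhd g W \<delta> \<subseteq> {p \<in> Gstep \<times> Gstep. (\<lambda>(f, g). F f g) p \<in> U}"
      using WV V(4) nbhd_subset by fastforce
    then show "\<exists>U1 U2. openin step_topology U1 \<and> openin step_topology U2 \<and> f \<in> U1 \<and> g \<in> U2 \<and>
        U1 \<times> U2 \<subseteq> {p \<in> Gstep \<times> Gstep. (\<lambda>(f, g). F f g) p \<in> U}"
      using openin_nbhd[OF f W(1)] openin_nbhd[OF g W(1)] mem_nbhd_self[OF f W(2,3)]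
        mem_nbhd_self[OF g W(2,3)] by blast
  qed
qed

lemma continuous_map_step_add:
  "continuous_map (prod_topology step_topology step_topology) step_topology (\<lambda>(f, g). f \<oplus>\<^sup>\<bullet> g)"
proof (rule continuous_map_step_topology_prodI[OF step_add_in])
  fix f g V and \<epsilon> :: real
  assume f: "f \<in> Gstep" and g: "g \<in> Gstep" and V: "openin T V" "\<zero> \<in> V" and "\<epsilon> > 0"
  define A where "A = f ` {0..<1} \<times> g ` {0..<1}"
  have "finite A" unfolding A_def using stepfuns_finite_image f g by blast
  then obtain W where W: "openin T W" "\<zero> \<in> W"
    and WA: "\<And>a b x y. (a, b) \<in> A \<Longrightarrow> x \<in> W \<Longrightarrow> y \<in> W \<Longrightarrow> \<ominus> (a \<oplus> b) \<oplus> ((a \<oplus> x) \<oplus> (b \<oplus> y)) \<in> V"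
  proof (rule finite_uniform_square_nbhd[OF _ V(1) zero_in,
        where \<Phi> = "\<lambda>(a, b) p. \<ominus> (a \<oplus> b) \<oplus> ((a \<oplus> fst p) \<oplus> (b \<oplus> snd p))"])
    fix p assume "p \<in> A"
    then obtain a b where p: "p = (a, b)" "a \<in> topspace T" "b \<in> topspace T"
      unfolding A_def using step_value_in f g by blast
    then show "continuous_map (prod_topology T T) T ((\<lambda>(a, b) p. \<ominus> (a \<oplus> b) \<oplus> ((a \<oplus> fst p) \<oplus> (b \<oplus> snd p))) p)"
      by (auto intro!: continuous_map_add continuous_map_fst continuous_map_snd
          simp: neg_in add_closed)
    show "(\<lambda>(a, b) p. \<ominus> (a \<oplus> b) \<oplus> ((a \<oplus> fst p) \<oplus> (b \<oplus> snd p))) p (\<zero>, \<zero>) \<in> V"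
      using p V(2) by (simp add: zero_right neg_left add_closed)
  qed (use that in fastforce)
  have "u \<oplus>\<^sup>\<bullet> v \<in> nbhd (f \<oplus>\<^sup>\<bullet> g) V \<epsilon>" if u: "u \<in> nbhd f W (\<epsilon> / 2)" and v: "v \<in> nbhd g W (\<epsilon> / 2)" for u v
  proof -
    have u_in: "u \<in> Gstep" and v_in: "v \<in> Gstep" using u v nbhd_subset by blast+
    have "deviation V (f \<oplus>\<^sup>\<bullet> g) (u \<oplus>\<^sup>\<bullet> v) \<le> deviation W f u + deviation W g v"
    proof (rule deviation_le_add[OF f u_in g v_in step_add_in[OF f g] step_add_in[OF u_in v_in]])
      fix r :: real assume r: "r \<in> {0..<1}" "\<ominus> f r \<oplus> u r \<in> W" "\<ominus> g r \<oplus> v r \<in> W"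
      then have "\<ominus> (f r \<oplus> g r) \<oplus> ((f r \<oplus> (\<ominus> f r \<oplus> u r)) \<oplus> (g r \<oplus> (\<ominus> g r \<oplus> v r))) \<in> V"
        using WA unfolding A_def by blast
      then show "\<ominus> (f \<oplus>\<^sup>\<bullet> g) r \<oplus> (u \<oplus>\<^sup>\<bullet> v) r \<in> V"
        unfolding stepop_def by (simp add: add_neg_cancel_left step_value_in f g u_in v_in)
    qed
    then show ?thesis using u v step_add_in[OF u_in v_in] unfolding nbhd_def by simp
  qed
  then show "\<exists>W \<delta>. openin T W \<and> \<zero> \<in> W \<and> \<delta> > 0 \<and>
      (\<forall>u\<in>nbhd f W \<delta>. \<forall>v\<in>nbhd g W \<delta>. u \<oplus>\<^sup>\<bullet> v \<in> nbhd (f \<oplus>\<^sup>\<bullet> g) V \<epsilon>)"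
    using W \<open>\<epsilon> > 0\<close> by (intro exI[of _ W] exI[of _ "\<epsilon> / 2"]) auto
qed

lemma continuous_map_step_topologyI:
  assumes closed: "\<And>f. f \<in> Gstep \<Longrightarrow> F f \<in> Gstep"
    and cont: "\<And>f V \<epsilon>. f \<in> Gstep \<Longrightarrow> openin T V \<Longrightarrow> \<zero> \<in> V \<Longrightarrow> \<epsilon> > 0 \<Longrightarrow>
      \<exists>W \<delta>. openin T W \<and> \<zero> \<in> W \<and> \<delta> > 0 \<and> (\<forall>u\<in>nbhd f W \<delta>. F u \<in> nbhd (F f) V \<epsilon>)"
  shows "continuous_map step_topology step_topology F"
proof -
  have "continuous_map (prod_topology step_topology step_topology) step_topology (\<lambda>(f, g). F f)"
    by (rule continuous_map_step_topology_prodI) (use closed cont in meson)+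
  then show ?thesis
    using continuous_map_compose[OF continuous_map_pairedI[OF continuous_map_id continuous_map_id]]
    by (fastforce simp: o_def)
qed

lemma continuous_map_step_neg: "continuous_map step_topology step_topology (\<lambda>f r. \<ominus> f r)"
proof (rule continuous_map_step_topologyI[OF step_neg_in])
  fix f V and \<epsilon> :: real
  assume f: "f \<in> Gstep" and V: "openin T V" "\<zero> \<in> V" and "\<epsilon> > 0"
  have "finite (f ` {0..<1})" using stepfuns_finite_image f by blast
  then obtain W where W: "openin T W" "\<zero> \<in> W"
    and WA: "\<And>a x y. a \<in> f ` {0..<1} \<Longrightarrow> x \<in> W \<Longrightarrow> y \<in> W \<Longrightarrow> \<ominus> (\<ominus> a) \<oplus> (\<ominus> (a \<oplus> x)) \<in> V"
  proof (rule finite_uniform_square_nbhd[OF _ V(1) zero_in,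
        where \<Phi> = "\<lambda>a p. \<ominus> (\<ominus> a) \<oplus> (\<ominus> (a \<oplus> fst p))"])
    fix a assume "a \<in> f ` {0..<1}"
    then have a: "a \<in> topspace T" using step_value_in f by blast
    then show "continuous_map (prod_topology T T) T (\<lambda>p. \<ominus> (\<ominus> a) \<oplus> (\<ominus> (a \<oplus> fst p)))"
      by (auto intro!: continuous_map_add continuous_map_neg continuous_map_fst simp: neg_in)
    show "\<ominus> (\<ominus> a) \<oplus> (\<ominus> (a \<oplus> fst (\<zero>, \<zero>))) \<in> V"
      using a V(2) by (simp add: zero_right neg_left neg_in)
  qed (use that in fastforce)
  have "(\<lambda>r. \<ominus> u r) \<in> nbhd (\<lambda>r. \<ominus> f r) V \<epsilon>" if u: "u \<in> nbhd f W \<epsilon>" for u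
  proof -
    have u_in: "u \<in> Gstep" using u nbhd_subset by blast
    have "deviation V (\<lambda>r. \<ominus> f r) (\<lambda>r. \<ominus> u r) \<le> deviation W f u"
    proof (rule deviation_le[OF f u_in step_neg_in[OF f] step_neg_in[OF u_in]])
      fix r :: real assume r: "r \<in> {0..<1}" "\<ominus> f r \<oplus> u r \<in> W"
      then have "\<ominus> (\<ominus> f r) \<oplus> (\<ominus> (f r \<oplus> (\<ominus> f r \<oplus> u r))) \<in> V"
        using WA W(2) by blast
      then show "\<ominus> (\<ominus> f r) \<oplus> (\<ominus> u r) \<in> V"
        by (simp add: add_neg_cancel_left step_value_in f u_in)
    qed
    then show ?thesis using u step_neg_in[OF u_in] unfolding nbhd_def by simp
  qed
  then show "\<exists>W \<delta>. openin T W \<and> \<zero> \<in> W \<and> \<delta> > 0 \<and>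
      (\<forall>u\<in>nbhd f W \<delta>. (\<lambda>r. \<ominus> u r) \<in> nbhd (\<lambda>r. \<ominus> f r) V \<epsilon>)"
    using W \<open>\<epsilon> > 0\<close> by blast
qed

lemma topological_gyrogroup_step_topology: "topological_gyrogroup step_topology (\<oplus>\<^sup>\<bullet>)"
  unfolding topological_gyrogroup_def topspace_step_topology
proof (intro conjI)
  show "gyrogroup Gstep (\<oplus>\<^sup>\<bullet>)" by (rule gyrogroup_Gstep)
  show "t1_space step_topology" using Hausdorff_space_step_topology by (rule Hausdorff_imp_t1_space)
  show "continuous_map (prod_topology step_topology step_topology) step_topology (\<lambda>(f, g). f \<oplus>\<^sup>\<bullet> g)"
    by (rule continuous_map_step_add)
  show "continuous_map step_topology step_topology (ginv Gstep (\<oplus>\<^sup>\<bullet>))"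
    by (rule continuous_map_eq[OF continuous_map_step_neg])
      (simp add: topspace_step_topology ginv_Gstep)
qed

end

theorem mainTheorem3:
  fixes T :: "'a topology" and op :: "'a \<Rightarrow> 'a \<Rightarrow> 'a"
  assumes "topological_gyrogroup T op"
  shows "\<exists>T'. topspace T' = stepfuns (topspace T) op \<and>
           local_base_at T'
             {Onbhd (topspace T) op V \<epsilon> | V \<epsilon>. openin T V \<and> gzero (topspace T) op \<in> V \<and> \<epsilon> > 0}
             (gzero (stepfuns (topspace T) op) (stepop op)) \<and>
           topological_gyrogroup T' (stepop op) \<and>
           Hausdorff_space T' \<and>
           (\<forall>f\<in>stepfuns (topspace T) op.
              local_base_at T'
                {stepop op f ` Onbhd (topspace T) op V \<epsilon> | V \<epsilon>.
                   openin T V \<and> gzero (topspace T) op \<in> V \<and> \<epsilon> > 0} f)"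
proof -
  interpret topological_gyrogroup_on T op
    using assms by unfold_locales (simp_all add: topological_gyrogroup_def)
  have translated_base:
    "local_base_at step_topology {stepop op f ` Onbhd (topspace T) op V \<epsilon> | V \<epsilon>.
       openin T V \<and> gzero (topspace T) op \<in> V \<and> \<epsilon> > 0} f" if "f \<in> Gstep" for f
    using local_base_at_nbhd[OF that] by (simp add: translate_Onbhd[OF that])
  have "stepop op (\<lambda>r. gzero (topspace T) op) ` Onbhd (topspace T) op V \<epsilon> = Onbhd (topspace T) op V \<epsilon>" for V \<epsilon>
    using step_add_zero_left unfolding Onbhd_def by (auto simp: image_iff)
  then have "local_base_at step_topology
      {Onbhd (topspace T) op V \<epsilon> | V \<epsilon>. openin T V \<and> gzero (topspace T) op \<in> V \<and> \<epsilon> > 0} (gzero Gstep (stepop op))"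
    using translated_base[OF step_zero_in] by (simp add: gzero_Gstep)
  then show ?thesis
    using topspace_step_topology topological_gyrogroup_step_topology Hausdorff_space_step_topology
      translated_base by blast
qed

end
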